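(* For every $\alpha>0$, with the initialization described in the context, $\mathbf{V}(0)+\mathbf{G}(0)=\mathbf{H}(0)$. Consequently, for $\alpha=1$, under gradient flow the predictions satisfy at time $0$ $$\frac{d\mathbf{f}}{dt}=-\boldsymbol{\Lambda}(0)(\mathbf{f}(0)-\mathbf{y})=-\mathbf{H}(0)(\mathbf{f}(0)-\mathbf{y}).$$
   Context: Data $(\mathbf{x}_i,y_i)\in\mathbb{R}^d\times\mathbb{R}$, $i=1,\dots,n$. Network $f(\mathbf{x})=\frac{1}{\sqrt m}\sum_{k=1}^m c_k\sigma(g_k\mathbf{v}_k^\top\mathbf{x}/\|\mathbf{v}_k\|_2)$, $\sigma(s)=\max\{s,0\}$; initialization: independently $\mathbf{v}_k(0)\sim N(0,\alpha^2\mathbf{I})$, $c_k$ uniform on $\{-1,1\}$, $g_k(0)=\|\mathbf{v}_k(0)\|_2/\alpha$. Loss $L=\frac12\sum_i(f(\mathbf{x}_i)-y_i)^2$; gradient flow $\frac{d\mathbf{v}_k}{dt}=-\partial L/\partial\mathbf{v}_k$, $\frac{dg_k}{dt}=-\partial L/\partial g_k$ with $c_k$ fixed; $\mathbf{f}(t)$ the vector of predictions. Notation: $\mathbf{x}^{\mathbf{u}}=\mathbf{u}\mathbf{u}^\top\mathbf{x}/\|\mathbf{u}\|_2^2$, $\mathbf{x}^{\mathbf{u}^\perp}=\mathbf{x}-\mathbf{x}^{\mathbf{u}}$, $\mathbb{1}_{ik}(t)=\mathbb{1}\{\mathbf{v}_k(t)^\top\mathbf{x}_i\ge0\}$. $\mathbf{V}_{ij}(t)=\frac1m\sum_k\big(\frac{\alpha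 c_kg_k(t)}{\|\mathbf{v}_k(t)\|_2}\big)^2\langle\mathbf{x}_i^{\mathbf{v}_k(t)^\perp},\mathbf{x}_j^{\mathbf{v}_k(t)^\perp}\rangle\mathbb{1}_{ik}(t)\mathbb{1}_{jk}(t)$, $\mathbf{G}_{ij}(t)=\frac1m\sum_k\sigma(\mathbf{v}_k(t)^\top\mathbf{x}_i)\sigma(\mathbf{v}_k(t)^\top\mathbf{x}_j)/\|\mathbf{v}_k(t)\|_2^2$, $\boldsymbol{\Lambda}(t)=\mathbf{V}(t)/\alpha^2+\mathbf{G}(t)$, and the (un-normalized) neural tangent kernel $\mathbf{H}_{ij}(0)=\frac1m\sum_k\mathbf{x}_i^\top\mathbf{x}_j\mathbb{1}_{ik}(0)\mathbb{1}_{jk}(0)$. *)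

theory Defs
  imports "HOL-Analysis.Analysis"
begin

text \<open>ReLU and the convention sigma'(s) = 1 if s >= 0 (as in the indicator 1_ik of the paper).\<close>
definition relu :: "real \<Rightarrow> real" where
  "relu s = max s 0"

definition relu_deriv :: "real \<Rightarrow> real" where
  "relu_deriv s = (if s \<ge> 0 then 1 else 0)"

definition proj :: "'a::euclidean_space \<Rightarrow> 'a \<Rightarrow> 'a" where
  "proj u x = ((u \<bullet> x) / (norm u)^2) *\<^sub>R u"

definition perp :: "'a::euclidean_space \<Rightarrow> 'a \<Rightarrow> 'a" where
  "perp u x = x - proj u x"

definition ind :: "'a::euclidean_space \<Rightarrow> 'a \<Rightarrow> real" where
  "ind v x = (if v \<bullet> x \<ge> 0 then 1 else 0)"

definition net :: "nat \<Rightarrow> (nat \<Rightarrow> real) \<Rightarrow> (nat \<Rightarrow> real) \<Rightarrow> (nat \<Rightarrow> 'a::euclidean_space) \<Rightarrow> 'a \<Rightarrow> real" where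
  "net m c g v x = (1 / sqrt (real m)) * (\<Sum>k<m. c k * relu (g k * (v k \<bullet> x) / norm (v k)))"

text \<open>Partial derivatives of L = 1/2 sum_i (f(x_i) - y_i)^2 with respect to v_k and g_k
  (chain rule, with the ReLU derivative convention above).\<close>
definition grad_v :: "nat \<Rightarrow> (nat \<Rightarrow> real) \<Rightarrow> nat \<Rightarrow> (nat \<Rightarrow> 'a::euclidean_space) \<Rightarrow> (nat \<Rightarrow> real)
    \<Rightarrow> (nat \<Rightarrow> real) \<Rightarrow> (nat \<Rightarrow> 'a) \<Rightarrow> nat \<Rightarrow> 'a" where
  "grad_v m c n X Y g v k =
     (\<Sum>i<n. ((net m c g v (X i) - Y i) * (1 / sqrt (real m)) * c k
        * relu_deriv (g k * (v k \<bullet> X i) / norm (v k)) * (g k / norm (v k))) *\<^sub>R perp (v k) (X i))"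

definition grad_g :: "nat \<Rightarrow> (nat \<Rightarrow> real) \<Rightarrow> nat \<Rightarrow> (nat \<Rightarrow> 'a::euclidean_space) \<Rightarrow> (nat \<Rightarrow> real)
    \<Rightarrow> (nat \<Rightarrow> real) \<Rightarrow> (nat \<Rightarrow> 'a) \<Rightarrow> nat \<Rightarrow> real" where
  "grad_g m c n X Y g v k =
     (\<Sum>i<n. (net m c g v (X i) - Y i) * (1 / sqrt (real m)) * c k
        * relu_deriv (g k * (v k \<bullet> X i) / norm (v k)) * ((v k \<bullet> X i) / norm (v k)))"

definition grad_flow :: "nat \<Rightarrow> (nat \<Rightarrow> real) \<Rightarrow> nat \<Rightarrow> (nat \<Rightarrow> 'a::euclidean_space) \<Rightarrow> (nat \<Rightarrow> real)
    \<Rightarrow> (real \<Rightarrow> nat \<Rightarrow> 'a) \<Rightarrow> (real \<Rightarrow> nat \<Rightarrow> real) \<Rightarrow> bool" where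
  "grad_flow m c n X Y v g \<longleftrightarrow>
     (\<forall>t\<ge>0. \<forall>k<m.
        ((\<lambda>s. v s k) has_vector_derivative (- grad_v m c n X Y (g t) (v t) k)) (at t within {0..}) \<and>
        ((\<lambda>s. g s k) has_real_derivative (- grad_g m c n X Y (g t) (v t) k)) (at t within {0..}))"

definition Vmat :: "nat \<Rightarrow> (nat \<Rightarrow> real) \<Rightarrow> real \<Rightarrow> (nat \<Rightarrow> real) \<Rightarrow> (nat \<Rightarrow> 'a::euclidean_space)
    \<Rightarrow> (nat \<Rightarrow> 'a) \<Rightarrow> nat \<Rightarrow> nat \<Rightarrow> real" where
  "Vmat m c \<alpha> g v X i j = (1 / real m) * (\<Sum>k<m. (\<alpha> * c k * g k / norm (v k))^2
      * (perp (v k) (X i) \<bullet> perp (v k) (X j)) * ind (v k) (X i) * ind (v k) (X j))"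

definition Gmat :: "nat \<Rightarrow> (nat \<Rightarrow> 'a::euclidean_space) \<Rightarrow> (nat \<Rightarrow> 'a) \<Rightarrow> nat \<Rightarrow> nat \<Rightarrow> real" where
  "Gmat m v X i j = (1 / real m) * (\<Sum>k<m. relu (v k \<bullet> X i) * relu (v k \<bullet> X j) / (norm (v k))^2)"

definition Lam :: "nat \<Rightarrow> (nat \<Rightarrow> real) \<Rightarrow> real \<Rightarrow> (nat \<Rightarrow> real) \<Rightarrow> (nat \<Rightarrow> 'a::euclidean_space)
    \<Rightarrow> (nat \<Rightarrow> 'a) \<Rightarrow> nat \<Rightarrow> nat \<Rightarrow> real" where
  "Lam m c \<alpha> g v X i j = Vmat m c \<alpha> g v X i j / \<alpha>^2 + Gmat m v X i j"

definition Hmat :: "nat \<Rightarrow> (nat \<Rightarrow> 'a::euclidean_space) \<Rightarrow> (nat \<Rightarrow> 'a) \<Rightarrow> nat \<Rightarrow> nat \<Rightarrow> real" where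
  "Hmat m v X i j = (1 / real m) * (\<Sum>k<m. (X i \<bullet> X j) * ind (v k) (X i) * ind (v k) (X j))"

end

theory Submission
  imports Defs
begin

(* Since g_k(0) = |v_k(0)| / alpha and c_k^2 = 1, the k-th summand of V(0) + G(0) is
   1_ik 1_jk (<x_i^perp, x_j^perp> + <x_i^v, x_j^v>) = 1_ik 1_jk <x_i, x_j>, by Pythagoras.
   For the dynamics, d/dt (v.x / |v|) = <v', x^perp> / |v|, so away from the kinks of the ReLU the
   chain rule turns the g-part of the gradient into G and the v-part into V / alpha^2: along the
   gradient flow df/dt = -Lambda(t) (f - y).  At t = 0 with alpha = 1 this kernel is V(0) + G(0) = H(0).
   Inputs x_i = 0 are trivial, as both f(x_i) and the i-th row of Lambda vanish. *)

lemma inner_perp_perp_add_proj: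
  fixes v a b :: "'a::euclidean_space"
  shows "perp v a \<bullet> perp v b + (v \<bullet> a) * (v \<bullet> b) / (norm v)\<^sup>2 = a \<bullet> b"
proof (cases "v = 0")
  case False
  then show ?thesis
    by (simp add: perp_def proj_def inner_diff_left inner_diff_right inner_commute
        power2_norm_eq_inner field_simps)
qed (simp add: perp_def proj_def)

lemma relu_inner_eq_mult_ind: "relu (v \<bullet> x) = (v \<bullet> x) * ind v x"
  by (simp add: relu_def ind_def)

lemma relu_deriv_eq_ind:
  assumes "a > 0"
  shows "relu_deriv (a * (v \<bullet> x) / norm v) = ind v x"
  using assms by (simp add: relu_deriv_def ind_def zero_le_divide_iff zero_le_mult_iff)

lemma Vmat_add_Gmat_eq_Hmat:
  assumes "\<forall>k<m. (\<alpha> * c k * g k / norm (v k))\<^sup>2 = 1"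
  shows "Vmat m c \<alpha> g v X i j + Gmat m v X i j = Hmat m v X i j"
  unfolding Vmat_def Gmat_def Hmat_def distrib_left[symmetric] sum.distrib[symmetric]
proof (intro arg_cong2[where f="(*)"] refl sum.cong)
  fix k assume "k \<in> {..<m}"
  then have "(\<alpha> * c k * g k / norm (v k))\<^sup>2 = 1" using assms by simp
  then show "(\<alpha> * c k * g k / norm (v k))\<^sup>2 * (perp (v k) (X i) \<bullet> perp (v k) (X j)) * ind (v k) (X i) * ind (v k) (X j)
      + relu (v k \<bullet> X i) * relu (v k \<bullet> X j) / (norm (v k))\<^sup>2 = (X i \<bullet> X j) * ind (v k) (X i) * ind (v k) (X j)"
    by (simp add: relu_inner_eq_mult_ind flip: inner_perp_perp_add_proj[of "v k" "X i" "X j"])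
       (simp add: algebra_simps)
qed

lemma init_scale_sq_eq_one:
  assumes "\<alpha> > 0" "c \<in> {-1, 1}" "v \<noteq> 0" "g = norm v / \<alpha>"
  shows "(\<alpha> * c * g / norm v)\<^sup>2 = 1"
  using assms by (auto simp: power_mult_distrib)

lemma Lam_eq_neuron_sum:
  assumes "\<alpha> \<noteq> 0"
  shows "Lam m c \<alpha> g v X i j = (1 / real m) * (\<Sum>k<m. ind (v k) (X i) * ind (v k) (X j) *
    ((c k * g k / norm (v k))\<^sup>2 * (perp (v k) (X i) \<bullet> perp (v k) (X j))
     + (v k \<bullet> X i) * (v k \<bullet> X j) / (norm (v k))\<^sup>2))"
proof -
  have "Vmat m c \<alpha> g v X i j / \<alpha>\<^sup>2 = (1 / real m) * (\<Sum>k<m. (c k * g k / norm (v k))\<^sup>2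
      * (perp (v k) (X i) \<bullet> perp (v k) (X j)) * ind (v k) (X i) * ind (v k) (X j))"
    unfolding Vmat_def using assms
    by (simp add: sum_divide_distrib power_mult_distrib power_divide mult_ac)
  then show ?thesis
    unfolding Lam_def Gmat_def
    by (simp add: relu_inner_eq_mult_ind sum.distrib add_divide_distrib algebra_simps)
qed

lemma has_real_derivative_inner_normalized:
  fixes w :: "real \<Rightarrow> 'a::euclidean_space"
  assumes w: "(w has_vector_derivative w') (at t within S)" and nz: "w t \<noteq> 0"
  shows "((\<lambda>s. (w s \<bullet> x) / norm (w s)) has_real_derivative (w' \<bullet> perp (w t) x) / norm (w t))
    (at t within S)"
proof -
  have dw: "(w has_derivative (\<lambda>h. h *\<^sub>R w')) (at t within S)"
    using w by (simp add: has_vector_derivative_def)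
  have "((\<lambda>s. w s \<bullet> x) has_real_derivative w' \<bullet> x) (at t within S)"
    using has_derivative_inner_left[OF dw, of x] by (simp add: has_field_derivative_def mult_commute_abs)
  moreover have "((\<lambda>s. norm (w s)) has_real_derivative (w t \<bullet> w') / norm (w t)) (at t within S)"
  proof -
    have "((\<lambda>s. norm (w s)) has_derivative (\<lambda>h. sgn (w t) \<bullet> (h *\<^sub>R w'))) (at t within S)"
      using has_derivative_compose[OF dw has_derivative_norm[OF nz]] by (simp add: inner_commute)
    moreover have "(\<lambda>h. sgn (w t) \<bullet> (h *\<^sub>R w')) = (*) ((w t \<bullet> w') / norm (w t))"
      by (auto simp: fun_eq_iff sgn_div_norm field_simps)
    ultimately show ?thesis
      by (simp add: has_field_derivative_def)
  qed
  ultimately show ?thesis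
    using nz by (auto intro!: derivative_eq_intros elim!: DERIV_cong
        simp: perp_def proj_def inner_diff_right inner_commute power2_eq_square field_simps)
qed

lemma relu_has_real_derivative:
  assumes "s \<noteq> 0"
  shows "(relu has_real_derivative relu_deriv s) (at s)"
proof (cases "s > 0")
  case True
  have "((\<lambda>x. x) has_real_derivative 1) (at s)" by (rule DERIV_ident)
  then have "(relu has_real_derivative 1) (at s)"
    by (rule has_field_derivative_transform_within_open[where S="{0<..}"])
       (use True in \<open>auto simp: relu_def\<close>)
  then show ?thesis using True by (simp add: relu_deriv_def)
next
  case False
  then have "s < 0" using assms by simp
  have "((\<lambda>x. 0) has_real_derivative 0) (at s)" by (rule DERIV_const)
  then have "(relu has_real_derivative 0) (at s)"
    by (rule has_field_derivative_transform_within_open[where S="{..<0}"])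
       (use \<open>s < 0\<close> in \<open>auto simp: relu_def\<close>)
  then show ?thesis using \<open>s < 0\<close> by (simp add: relu_deriv_def)
qed

lemma has_real_derivative_neuron:
  fixes w :: "real \<Rightarrow> 'a::euclidean_space"
  assumes w: "(w has_vector_derivative w') (at t within S)"
    and a: "(a has_real_derivative a') (at t within S)"
    and "w t \<noteq> 0" "a t > 0" "w t \<bullet> x \<noteq> 0"
  shows "((\<lambda>s. relu (a s * (w s \<bullet> x) / norm (w s))) has_real_derivative
     ind (w t) x * (a' * (w t \<bullet> x) / norm (w t) + a t * (w' \<bullet> perp (w t) x) / norm (w t)))
     (at t within S)"
proof -
  have inner: "((\<lambda>s. a s * (w s \<bullet> x) / norm (w s)) has_real_derivative
      a' * (w t \<bullet> x) / norm (w t) + a t * (w' \<bullet> perp (w t) x) / norm (w t)) (at t within S)"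
    using DERIV_mult[OF a has_real_derivative_inner_normalized[OF w \<open>w t \<noteq> 0\<close>, of x]]
    by simp (erule DERIV_cong, simp add: algebra_simps)
  have "a t * (w t \<bullet> x) / norm (w t) \<noteq> 0"
    using assms(3-5) by simp
  from DERIV_chain2[OF relu_has_real_derivative[OF this] inner] show ?thesis
    by (simp add: relu_deriv_eq_ind[OF \<open>a t > 0\<close>])
qed

lemma grad_g_eq:
  assumes "g k > 0"
  shows "grad_g m c n X Y g v k = c k / sqrt (real m) *
    (\<Sum>j<n. (net m c g v (X j) - Y j) * ind (v k) (X j) * (v k \<bullet> X j) / norm (v k))"
  unfolding grad_g_def relu_deriv_eq_ind[OF assms] sum_distrib_left
  by (rule sum.cong) simp_all

lemma inner_grad_v_perp_eq:
  assumes "g k > 0"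
  shows "grad_v m c n X Y g v k \<bullet> perp (v k) x = c k / sqrt (real m) * (g k / norm (v k)) *
    (\<Sum>j<n. (net m c g v (X j) - Y j) * ind (v k) (X j) * (perp (v k) (X j) \<bullet> perp (v k) x))"
  unfolding grad_v_def relu_deriv_eq_ind[OF assms] sum_distrib_left inner_sum_left
  by (rule sum.cong) simp_all

lemma net_has_derivative_along_grad_flow:
  assumes flow: "grad_flow m c n X Y v g" and "t \<ge> 0" and "\<alpha> \<noteq> 0"
    and c: "\<forall>k<m. c k \<in> {-1, 1}"
    and nonzero: "\<forall>k<m. v t k \<noteq> 0" and pos: "\<forall>k<m. g t k > 0"
    and off_kink: "\<forall>k<m. v t k \<bullet> X i \<noteq> 0"
  shows "((\<lambda>s. net m c (g s) (v s) (X i)) has_real_derivative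
    - (\<Sum>j<n. Lam m c \<alpha> (g t) (v t) X i j * (net m c (g t) (v t) (X j) - Y j))) (at t within {0..})"
proof -
  define r where "r j = net m c (g t) (v t) (X j) - Y j" for j
  define K where "K k j = ind (v t k) (X i) * ind (v t k) (X j) *
    ((c k * g t k / norm (v t k))\<^sup>2 * (perp (v t k) (X i) \<bullet> perp (v t k) (X j))
     + (v t k \<bullet> X i) * (v t k \<bullet> X j) / (norm (v t k))\<^sup>2)" for k j
  define D where "D k = ind (v t k) (X i) *
    (- grad_g m c n X Y (g t) (v t) k * (v t k \<bullet> X i) / norm (v t k)
     + g t k * (- grad_v m c n X Y (g t) (v t) k \<bullet> perp (v t k) (X i)) / norm (v t k))" for k
  have neuron_deriv: "((\<lambda>s. relu (g s k * (v s k \<bullet> X i) / norm (v s k))) has_real_derivative D k)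
      (at t within {0..})" if "k < m" for k
  proof -
    have "((\<lambda>s. v s k) has_vector_derivative - grad_v m c n X Y (g t) (v t) k) (at t within {0..})"
      and "((\<lambda>s. g s k) has_real_derivative - grad_g m c n X Y (g t) (v t) k) (at t within {0..})"
      using flow \<open>t \<ge> 0\<close> that unfolding grad_flow_def by auto
    from has_real_derivative_neuron[OF this] show ?thesis
      using nonzero pos off_kink that unfolding D_def by simp
  qed
  then have net_deriv: "((\<lambda>s. net m c (g s) (v s) (X i)) has_real_derivative
      1 / sqrt (real m) * (\<Sum>k<m. c k * D k)) (at t within {0..})"
    unfolding net_def by (intro DERIV_cmult DERIV_sum) auto
  have neuron_term: "c k * D k = - (1 / sqrt (real m)) * (\<Sum>j<n. r j * K k j)" if "k < m" for k
  proof -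
    define S\<^sub>g where "S\<^sub>g = (\<Sum>j<n. r j * ind (v t k) (X j) * (v t k \<bullet> X j) / norm (v t k))"
    define S\<^sub>v where "S\<^sub>v = (\<Sum>j<n. r j * ind (v t k) (X j) * (perp (v t k) (X j) \<bullet> perp (v t k) (X i)))"
    have grad_g_k: "grad_g m c n X Y (g t) (v t) k = c k / sqrt (real m) * S\<^sub>g"
      using pos that by (simp add: grad_g_eq S\<^sub>g_def r_def)
    have grad_v_k: "grad_v m c n X Y (g t) (v t) k \<bullet> perp (v t k) (X i)
        = c k / sqrt (real m) * (g t k / norm (v t k)) * S\<^sub>v"
      using pos that by (simp add: inner_grad_v_perp_eq S\<^sub>v_def r_def)
    have "c k * D k = - (1 / sqrt (real m)) * (c k)\<^sup>2 * ind (v t k) (X i) *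
        ((g t k / norm (v t k))\<^sup>2 * S\<^sub>v + S\<^sub>g * (v t k \<bullet> X i) / norm (v t k))"
      using nonzero that unfolding D_def inner_minus_left grad_g_k grad_v_k
      by (simp add: field_simps power2_eq_square)
    moreover have "(\<Sum>j<n. r j * K k j) = ind (v t k) (X i) *
        ((c k * g t k / norm (v t k))\<^sup>2 * S\<^sub>v + S\<^sub>g * (v t k \<bullet> X i) / norm (v t k))"
      unfolding K_def S\<^sub>g_def S\<^sub>v_def sum_distrib_left sum_distrib_right sum_divide_distrib sum.distrib[symmetric]
      by (rule sum.cong) (simp_all add: inner_commute power2_eq_square algebra_simps)
    \<comment> \<open>only the G-part needs this: in the V-part the factor c_k^2 is part of Lambda itself\<close>
    moreover have "(c k)\<^sup>2 = 1" using c that by auto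
    ultimately show ?thesis
      by (simp add: power_mult_distrib power_divide)
  qed
  have "1 / sqrt (real m) * (\<Sum>k<m. c k * D k)
      = - (1 / sqrt (real m))\<^sup>2 * (\<Sum>k<m. \<Sum>j<n. r j * K k j)"
    using neuron_term by (simp add: power2_eq_square sum_distrib_left)
  also have "\<dots> = - (\<Sum>j<n. (1 / real m * (\<Sum>k<m. K k j)) * r j)"
    by (simp add: power_divide sum.swap[of _ "{..<m}"] sum_distrib_left sum_distrib_right mult_ac
        flip: sum_negf)
  also have "\<dots> = - (\<Sum>j<n. Lam m c \<alpha> (g t) (v t) X i j * r j)"
    unfolding K_def Lam_eq_neuron_sum[OF \<open>\<alpha> \<noteq> 0\<close>] ..
  finally show ?thesis
    using net_deriv by (simp add: r_def)
qed

lemma net_zero_input: "net m c g v 0 = 0"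
  by (simp add: net_def relu_def)

lemma Lam_zero_input: "X i = 0 \<Longrightarrow> Lam m c \<alpha> g v X i j = 0"
  by (simp add: Lam_def Vmat_def Gmat_def perp_def proj_def relu_def)

theorem proposition3p1:
  fixes \<alpha> :: real and m n :: nat
    and X :: "nat \<Rightarrow> 'a::euclidean_space" and Y :: "nat \<Rightarrow> real"
    and c :: "nat \<Rightarrow> real" and v0 :: "nat \<Rightarrow> 'a" and g0 :: "nat \<Rightarrow> real"
  assumes "\<alpha> > 0"
    and "\<forall>k<m. c k \<in> {-1, 1}"
    and "\<forall>k<m. v0 k \<noteq> 0"
    and "\<forall>k<m. g0 k = norm (v0 k) / \<alpha>"
  shows "(\<forall>i<n. \<forall>j<n. Vmat m c \<alpha> g0 v0 X i j + Gmat m v0 X i j = Hmat m v0 X i j) \<and>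
         (\<alpha> = 1 \<longrightarrow> (\<forall>i<n. \<forall>k<m. X i \<noteq> 0 \<longrightarrow> v0 k \<bullet> X i \<noteq> 0) \<longrightarrow>
           (\<forall>v g. grad_flow m c n X Y v g \<and> v 0 = v0 \<and> g 0 = g0 \<longrightarrow>
             (\<forall>i<n.
               ((\<lambda>t. net m c (g t) (v t) (X i)) has_real_derivative
                  (- (\<Sum>j<n. Lam m c \<alpha> g0 v0 X i j * (net m c g0 v0 (X j) - Y j)))) (at 0 within {0..}) \<and>
               (\<Sum>j<n. Lam m c \<alpha> g0 v0 X i j * (net m c g0 v0 (X j) - Y j))
                 = (\<Sum>j<n. Hmat m v0 X i j * (net m c g0 v0 (X j) - Y j)))))"
proof -
  have VGH: "Vmat m c \<alpha> g0 v0 X i j + Gmat m v0 X i j = Hmat m v0 X i j" for i j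
    using assms by (intro Vmat_add_Gmat_eq_Hmat allI impI init_scale_sq_eq_one) auto
  show ?thesis
  proof (intro conjI impI allI)
    fix v g i
    assume "\<alpha> = 1" and kink: "\<forall>i<n. \<forall>k<m. X i \<noteq> 0 \<longrightarrow> v0 k \<bullet> X i \<noteq> 0"
      and flow: "grad_flow m c n X Y v g \<and> v 0 = v0 \<and> g 0 = g0" and "i < n"
    show "((\<lambda>t. net m c (g t) (v t) (X i)) has_real_derivative
        - (\<Sum>j<n. Lam m c \<alpha> g0 v0 X i j * (net m c g0 v0 (X j) - Y j))) (at 0 within {0..})"
    proof (cases "X i = 0")
      case True
      then show ?thesis by (simp add: net_zero_input Lam_zero_input)
    next
      case False
      then show ?thesis
        using net_has_derivative_along_grad_flow[of m c n X Y v g 0 \<alpha> i] assms flow kink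
          \<open>\<alpha> = 1\<close> \<open>i < n\<close> by simp
    qed
    have "Lam m c \<alpha> g0 v0 X i j = Hmat m v0 X i j" for j
      using VGH \<open>\<alpha> = 1\<close> by (simp add: Lam_def)
    then show "(\<Sum>j<n. Lam m c \<alpha> g0 v0 X i j * (net m c g0 v0 (X j) - Y j))
        = (\<Sum>j<n. Hmat m v0 X i j * (net m c g0 v0 (X j) - Y j))"
      by simp
  qed (rule VGH)
qed

end
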